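(* For the Bochner Laplacian $\nabla^*\nabla$ on real $p$-forms, the following three identities hold, with $S=s-n/2$: $$Q^{(1)}=(S^2-\tfrac14)|\xi|^{n-2s}\binom np\big(\operatorname{tr}(H\Pi_\xi^\perp)\big)^2,$$ $$Q^{(2)}=(S-\tfrac12)|\xi|^{n-2s}\,4\binom{n-2}{p-1}\operatorname{tr}\big((H\Pi_\xi^\perp)^2\big)+(S-\tfrac12)|\xi|^{n-2s-4}\binom np\big(-2|\xi|^2|h\cdot\xi|^2+2(\xi\cdot h\cdot\xi)^2\big),$$ $$Q^{(3)}=(S-\tfrac12)|\xi|^{n-2s}\binom np\big(\operatorname{tr}(H\Pi_\xi^\perp)\big)^2+(S-\tfrac12)|\xi|^{n-2s-4}\binom np\big(4|\xi|^2|h\cdot\xi|^2-3(\xi\cdot h\cdot\xi)^2-|\xi|^2(\xi\cdot h\cdot\xi)(\operatorname{tr}h)\big).$$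
   Context: Fix a point $x$ of a Riemannian $n$-manifold $(M,g)$ and normal coordinates for $g$ at $x$, with $\partial_i=\partial/\partial x^i$. Trivialize real $p$-forms by the basis $dx^I$, where $I$ ranges over the $p$-subsets of $\{1,\dots,n\}$; operators then become $N\times N$ matrices, $N=\binom np$. Let $h$ be a smooth symmetric 2-tensor, $\Delta$ the operator under consideration, and $\Delta'=\frac{d}{d\alpha}|_{0}\Delta(g+\alpha h)$. At $x$, modulo terms $(\partial^\alpha h_{ij})\partial^\beta$ of total degree $|\alpha|+|\beta|<2$, write $$\Delta'\sim\sum_{i,j}h_{ij}\partial^2_{ij}\,\mathrm{Id}+\sum_{i,j,k,\ell}\big(A^{ij}_{k\ell}(\partial_kh_{ij})\partial_\ell+B^{ij}_{k\ell}(\partial^2_{k\ell}h_{ij})\big),$$ with $N\times N$ real matrices $A^{ij}_{k\ell}$ and $B^{ij}_{k\ell}$. For $\xi\in\mathbb R^n\setminus\{0\}$, with $h=(h_{ij}(x))$ regarded as a symmetric matrix, set $$h\cdot\xi=\Big(\sum_jh_{ij}\xi_j\Big)_i,\quad \xi\cdot h\cdot\xi=\sum h_{ij}\xi_i\xi_j,\quad |h|^2=\sum h_{ij}^2,\quad \operatorname{tr}h=\sum h_{ii}.$$ Let $H$ be the matrix $h$ and $\Pi_\xi^\perp=I-|\xi|^{-2}\xi\xi^T$, so that $$\operatorname{tr}((H\Pi_\xi^\perp)^2)=|h|^2-2|\xi|^{-2}|h\cdot\xi|^2+|\xi|^{-4}(\xi\cdot h\cdot\xi)^2,\qquad \operatorname{tr}(H\Pi_\xi^\perp)=\operatorname{tr}h-|\xi|^{-2}\xi\cdot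 h\cdot\xi.$$ The coefficient symbols are the $N\times N$ matrices $$\sigma^{(2)}=(\xi\cdot h\cdot\xi)\mathrm{Id},\qquad \sigma^{(1)}=\sum A^{ij}_{k\ell}\xi_k\xi_\ell h_{ij},\qquad \sigma^{(0)}=\sum B^{ij}_{k\ell}\xi_k\xi_\ell h_{ij},$$ and the coefficient components are $\sigma^{(1)}_{k\ell}=\sum_{i,j}A^{ij}_{k\ell}h_{ij}$. With $S=s-n/2$, define $$Q^{(1)}=(S^2-\tfrac14)|\xi|^{n-2s-4}\operatorname{trace}\big((\sigma^{(2)}-2\sigma^{(1)}+4\sigma^{(0)})^2\big),$$ $$Q^{(2)}=(2S-1)|\xi|^{n-2s-4}\operatorname{trace}\Big((\sigma^{(1)})^2-|\xi|^2\sum_j\Big(\sum_i\xi_i\sigma^{(1)}_{ij}\Big)^2\Big),$$ $$\begin{aligned}Q^{(3)}=(2S-1)|\xi|^{n-2s-4}\Big(&(\xi\cdot h\cdot\xi)\operatorname{trace}(-\sigma^{(1)}-2\sigma^{(0)})+|\xi|^2(\operatorname{tr}h)\operatorname{trace}(-\sigma^{(1)}+2\sigma^{(0)})\\&+|\xi|^2\operatorname{trace}\sum_{i,j}\sigma^{(1)}_{ij}\big(\xi_i(h\cdot\xi)_j+\xi_j(h\cdot\xi)_i\big)\Big).\end{aligned}$$ Here "trace" is the trace of $N\times N$ matrices. *)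

theory Defs
  imports "HOL-Analysis.Analysis"
begin

text \<open>
  Coordinates are indexed by a finite linearly ordered type 'n, so n = CARD('n).
  All objects are represented by their 2-jets at the fixed point x (in normal coordinates):
  this is all that enters the coefficients A and B of the linearised operator.
  A real p-form is stored by its coefficients on the basis dx^I, I a p-subset of 'n
  (written with increasing indices); N x N matrices are functions 'n set => 'n set => real.
\<close>

type_synonym 'n form = "'n set \<Rightarrow> real"
type_synonym 'n fmat = "'n set \<Rightarrow> 'n set \<Rightarrow> real"

definition psubsets :: "nat \<Rightarrow> 'n::finite set set" where
  "psubsets p = {I. card I = p}"

definition mtrace :: "nat \<Rightarrow> ('n::finite) fmat \<Rightarrow> real" where
  "mtrace p M = (\<Sum>I\<in>psubsets p. M I I)"

definition mmult :: "nat \<Rightarrow> ('n::finite) fmat \<Rightarrow> 'n fmat \<Rightarrow> 'n fmat" where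
  "mmult p M1 M2 = (\<lambda>I J. \<Sum>K\<in>psubsets p. M1 I K * M2 K J)"

definition mId :: "'n fmat" where
  "mId = (\<lambda>I J. if I = J then 1 else 0)"

definition inversions :: "'n::linorder list \<Rightarrow> nat" where
  "inversions xs = card {(a, b). a < b \<and> b < length xs \<and> xs ! b < xs ! a}"

text \<open>component omega_{i_1 ... i_p} of the alternating tensor of the form u = sum_I u_I dx^I\<close>
definition comp :: "'n::linorder form \<Rightarrow> 'n list \<Rightarrow> real" where
  "comp u xs = (if distinct xs then (-1) ^ inversions xs * u (set xs) else 0)"

definition minv :: "('n::finite \<Rightarrow> 'n \<Rightarrow> real) \<Rightarrow> 'n \<Rightarrow> 'n \<Rightarrow> real" where
  "minv g = (\<lambda>i j. matrix_inv (\<chi> a b. g a b) $ i $ j)"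

text \<open>
  Bochner Laplacian nabla^* nabla on p-forms at the point, in coordinates, as a function of the
  2-jet of the metric (g0 i j = g_ij, g1 k i j = d_k g_ij, g2 e k i j = d_e d_k g_ij)
  and of the 2-jet of the form u (u0, u1 k = d_k u, u2 a b = d_a d_b u).
  Christoffel symbols: Gamma c a b = Gamma^c_{ab}.
  (nabla u)_{b I} = d_b u_I - sum_r Gamma^c_{b i_r} u_{..c..};
  (nabla^2 u)_{a b I} = d_a (nabla u)_{b I} - Gamma^c_{ab} (nabla u)_{c I}
                        - sum_r Gamma^c_{a i_r} (nabla u)_{b ..c..};
  nabla^* nabla u = - g^{ab} (nabla^2 u)_{a b}.
\<close>
definition bochner ::
  "nat \<Rightarrow> ('n::{finite,linorder} \<Rightarrow> 'n \<Rightarrow> real) \<Rightarrow> ('n \<Rightarrow> 'n \<Rightarrow> 'n \<Rightarrow> real)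
     \<Rightarrow> ('n \<Rightarrow> 'n \<Rightarrow> 'n \<Rightarrow> 'n \<Rightarrow> real)
     \<Rightarrow> 'n form \<Rightarrow> ('n \<Rightarrow> 'n form) \<Rightarrow> ('n \<Rightarrow> 'n \<Rightarrow> 'n form) \<Rightarrow> 'n form" where
  "bochner p g0 g1 g2 u0 u1 u2 =
    (let gi = minv g0;
         Gam = (\<lambda>c a b. (1/2) * (\<Sum>d\<in>UNIV. gi c d * (g1 a d b + g1 b d a - g1 d a b)));
         dgi = (\<lambda>e c d. - (\<Sum>f\<in>UNIV. \<Sum>k\<in>UNIV. gi c f * g1 e f k * gi k d));
         dGam = (\<lambda>e c a b. (1/2) * (\<Sum>d\<in>UNIV.
                    dgi e c d * (g1 a d b + g1 b d a - g1 d a b)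
                    + gi c d * (g2 e a d b + g2 e b d a - g2 e d a b)));
         nab = (\<lambda>b xs. comp (u1 b) xs
                  - (\<Sum>r<p. \<Sum>c\<in>UNIV. Gam c b (xs ! r) * comp u0 (xs[r := c])));
         dnab = (\<lambda>a b xs. comp (u2 a b) xs
                  - (\<Sum>r<p. \<Sum>c\<in>UNIV. dGam a c b (xs ! r) * comp u0 (xs[r := c])
                                      + Gam c b (xs ! r) * comp (u1 a) (xs[r := c])));
         nab2 = (\<lambda>a b xs. dnab a b xs - (\<Sum>c\<in>UNIV. Gam c a b * nab c xs)
                  - (\<Sum>r<p. \<Sum>c\<in>UNIV. Gam c a (xs ! r) * nab b (xs[r := c])))
     in (\<lambda>I. - (\<Sum>a\<in>UNIV. \<Sum>b\<in>UNIV. gi a b * nab2 a b (sorted_list_of_set I))))"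

definition bochner_var ::
  "nat \<Rightarrow> ('n::{finite,linorder} \<Rightarrow> 'n \<Rightarrow> real) \<Rightarrow> ('n \<Rightarrow> 'n \<Rightarrow> 'n \<Rightarrow> real)
     \<Rightarrow> ('n \<Rightarrow> 'n \<Rightarrow> 'n \<Rightarrow> 'n \<Rightarrow> real)
     \<Rightarrow> ('n \<Rightarrow> 'n \<Rightarrow> real) \<Rightarrow> ('n \<Rightarrow> 'n \<Rightarrow> 'n \<Rightarrow> real)
     \<Rightarrow> ('n \<Rightarrow> 'n \<Rightarrow> 'n \<Rightarrow> 'n \<Rightarrow> real)
     \<Rightarrow> 'n form \<Rightarrow> ('n \<Rightarrow> 'n form) \<Rightarrow> ('n \<Rightarrow> 'n \<Rightarrow> 'n form) \<Rightarrow> 'n form" where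
  "bochner_var p g0 g1 g2 h0 h1 h2 u0 u1 u2 =
    (\<lambda>I. deriv (\<lambda>\<alpha>. bochner p (\<lambda>i j. g0 i j + \<alpha> * h0 i j) (\<lambda>k i j. g1 k i j + \<alpha> * h1 k i j)
                        (\<lambda>e k i j. g2 e k i j + \<alpha> * h2 e k i j) u0 u1 u2 I) 0)"

text \<open>
  2-jet of the metric in normal coordinates at x: g_ij(x) = delta_ij, d g(x) = 0, and the
  second derivatives G2 (symmetric in both index pairs) satisfy the normal-coordinate condition
  sum_{j,k,l} d_k d_l g_ij y^j y^k y^l = 0 (from g_ij(y) y^j = y^i).
\<close>
definition normal_2jet :: "('n::finite \<Rightarrow> 'n \<Rightarrow> 'n \<Rightarrow> 'n \<Rightarrow> real) \<Rightarrow> bool" where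
  "normal_2jet G2 \<longleftrightarrow>
     (\<forall>e k i j. G2 e k i j = G2 k e i j \<and> G2 e k i j = G2 e k j i) \<and>
     (\<forall>y i. (\<Sum>j\<in>UNIV. \<Sum>k\<in>UNIV. \<Sum>l\<in>UNIV. G2 k l i j * y j * y k * y l) = 0)"

definition delta :: "'n \<Rightarrow> 'n \<Rightarrow> real" where
  "delta i j = (if i = j then 1 else 0)"

definition unitform :: "'n set \<Rightarrow> 'n form" where
  "unitform J = (\<lambda>K. if K = J then 1 else 0)"

text \<open>
  Coefficient components sigma1_{kl} = sum_{ij} A^{ij}_{kl} h_ij: the matrix (column J) is the value
  of Delta' on a jet where only d_k h = H and only d_l u = dx^J are nonzero (so all lower-order terms
  and the other degree-two terms vanish).
\<close>
definition sigma1c :: "nat \<Rightarrow> ('n::{finite,linorder} \<Rightarrow> 'n \<Rightarrow> 'n \<Rightarrow> 'n \<Rightarrow> real)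
    \<Rightarrow> ('n \<Rightarrow> 'n \<Rightarrow> real) \<Rightarrow> 'n \<Rightarrow> 'n \<Rightarrow> 'n fmat" where
  "sigma1c p G2 H k l = (\<lambda>I J.
     bochner_var p delta (\<lambda>_ _ _. 0) G2
       (\<lambda>_ _. 0) (\<lambda>m i j. if m = k then H i j else 0) (\<lambda>_ _ _ _. 0)
       (\<lambda>_. 0) (\<lambda>m. if m = l then unitform J else (\<lambda>_. 0)) (\<lambda>_ _ _. 0) I)"

definition sigma1 :: "nat \<Rightarrow> ('n::{finite,linorder} \<Rightarrow> 'n \<Rightarrow> 'n \<Rightarrow> 'n \<Rightarrow> real)
    \<Rightarrow> ('n \<Rightarrow> 'n \<Rightarrow> real) \<Rightarrow> ('n \<Rightarrow> real) \<Rightarrow> 'n fmat" where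
  "sigma1 p G2 H \<xi> = (\<lambda>I J. \<Sum>k\<in>UNIV. \<Sum>l\<in>UNIV. \<xi> k * \<xi> l * sigma1c p G2 H k l I J)"

text \<open>
  sigma0 = sum B^{ij}_{kl} xi_k xi_l h_ij: value of Delta' on a jet where only
  d_k d_l h = xi_k xi_l H and only u = dx^J are nonzero.
\<close>
definition sigma0 :: "nat \<Rightarrow> ('n::{finite,linorder} \<Rightarrow> 'n \<Rightarrow> 'n \<Rightarrow> 'n \<Rightarrow> real)
    \<Rightarrow> ('n \<Rightarrow> 'n \<Rightarrow> real) \<Rightarrow> ('n \<Rightarrow> real) \<Rightarrow> 'n fmat" where
  "sigma0 p G2 H \<xi> = (\<lambda>I J.
     bochner_var p delta (\<lambda>_ _ _. 0) G2
       (\<lambda>_ _. 0) (\<lambda>_ _ _. 0) (\<lambda>k l i j. \<xi> k * \<xi> l * H i j)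
       (unitform J) (\<lambda>_. (\<lambda>_. 0)) (\<lambda>_ _ _. 0) I)"

definition xhx :: "('n::finite \<Rightarrow> 'n \<Rightarrow> real) \<Rightarrow> ('n \<Rightarrow> real) \<Rightarrow> real" where
  "xhx H \<xi> = (\<Sum>i\<in>UNIV. \<Sum>j\<in>UNIV. H i j * \<xi> i * \<xi> j)"

definition hdot :: "('n::finite \<Rightarrow> 'n \<Rightarrow> real) \<Rightarrow> ('n \<Rightarrow> real) \<Rightarrow> 'n \<Rightarrow> real" where
  "hdot H \<xi> = (\<lambda>i. \<Sum>j\<in>UNIV. H i j * \<xi> j)"

definition nsq :: "('n::finite \<Rightarrow> real) \<Rightarrow> real" where
  "nsq \<xi> = (\<Sum>i\<in>UNIV. \<xi> i ^ 2)"

definition vnorm :: "('n::finite \<Rightarrow> real) \<Rightarrow> real" where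
  "vnorm \<xi> = sqrt (nsq \<xi>)"

definition mtr :: "('n::finite \<Rightarrow> 'n \<Rightarrow> real) \<Rightarrow> real" where
  "mtr H = (\<Sum>i\<in>UNIV. H i i)"

definition smul :: "('n::finite \<Rightarrow> 'n \<Rightarrow> real) \<Rightarrow> ('n \<Rightarrow> 'n \<Rightarrow> real) \<Rightarrow> 'n \<Rightarrow> 'n \<Rightarrow> real" where
  "smul X Y = (\<lambda>i j. \<Sum>k\<in>UNIV. X i k * Y k j)"

definition proj_perp :: "('n::finite \<Rightarrow> real) \<Rightarrow> 'n \<Rightarrow> 'n \<Rightarrow> real" where
  "proj_perp \<xi> = (\<lambda>i j. delta i j - \<xi> i * \<xi> j / nsq \<xi>)"

definition binom_int :: "int \<Rightarrow> int \<Rightarrow> real" where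
  "binom_int a b = (if b < 0 then 0 else (of_int a :: real) gchoose (nat b))"

definition fadd :: "'n fmat \<Rightarrow> 'n fmat \<Rightarrow> 'n fmat" where
  "fadd M1 M2 = (\<lambda>I J. M1 I J + M2 I J)"

definition fscale :: "real \<Rightarrow> 'n fmat \<Rightarrow> 'n fmat" where
  "fscale c M = (\<lambda>I J. c * M I J)"

definition sigma2 :: "('n::finite \<Rightarrow> 'n \<Rightarrow> real) \<Rightarrow> ('n \<Rightarrow> real) \<Rightarrow> 'n fmat" where
  "sigma2 H \<xi> = fscale (xhx H \<xi>) mId"

definition Q1 :: "nat \<Rightarrow> real \<Rightarrow> ('n::{finite,linorder} \<Rightarrow> 'n \<Rightarrow> 'n \<Rightarrow> 'n \<Rightarrow> real)
    \<Rightarrow> ('n \<Rightarrow> 'n \<Rightarrow> real) \<Rightarrow> ('n \<Rightarrow> real) \<Rightarrow> real" where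
  "Q1 p s G2 H \<xi> =
    (let S = s - real CARD('n) / 2;
         X = fadd (fadd (sigma2 H \<xi>) (fscale (-2) (sigma1 p G2 H \<xi>))) (fscale 4 (sigma0 p G2 H \<xi>))
     in (S^2 - 1/4) * vnorm \<xi> powr (real CARD('n) - 2 * s - 4) * mtrace p (mmult p X X))"

definition Q2 :: "nat \<Rightarrow> real \<Rightarrow> ('n::{finite,linorder} \<Rightarrow> 'n \<Rightarrow> 'n \<Rightarrow> 'n \<Rightarrow> real)
    \<Rightarrow> ('n \<Rightarrow> 'n \<Rightarrow> real) \<Rightarrow> ('n \<Rightarrow> real) \<Rightarrow> real" where
  "Q2 p s G2 H \<xi> =
    (let S = s - real CARD('n) / 2;
         s1 = sigma1 p G2 H \<xi>;
         V = (\<lambda>j. (\<lambda>I J. \<Sum>i\<in>UNIV. \<xi> i * sigma1c p G2 H i j I J));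
         M = (\<lambda>I J. \<Sum>j\<in>UNIV. mmult p (V j) (V j) I J)
     in (2 * S - 1) * vnorm \<xi> powr (real CARD('n) - 2 * s - 4)
          * mtrace p (fadd (mmult p s1 s1) (fscale (- nsq \<xi>) M)))"

definition Q3 :: "nat \<Rightarrow> real \<Rightarrow> ('n::{finite,linorder} \<Rightarrow> 'n \<Rightarrow> 'n \<Rightarrow> 'n \<Rightarrow> real)
    \<Rightarrow> ('n \<Rightarrow> 'n \<Rightarrow> real) \<Rightarrow> ('n \<Rightarrow> real) \<Rightarrow> real" where
  "Q3 p s G2 H \<xi> =
    (let S = s - real CARD('n) / 2;
         s1 = sigma1 p G2 H \<xi>;
         s0 = sigma0 p G2 H \<xi>;
         hx = hdot H \<xi>;
         T = (\<lambda>I J. \<Sum>i\<in>UNIV. \<Sum>j\<in>UNIV.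
                 sigma1c p G2 H i j I J * (\<xi> i * hx j + \<xi> j * hx i))
     in (2 * S - 1) * vnorm \<xi> powr (real CARD('n) - 2 * s - 4)
        * (xhx H \<xi> * mtrace p (fadd (fscale (-1) s1) (fscale (-2) s0))
           + nsq \<xi> * mtr H * mtrace p (fadd (fscale (-1) s1) (fscale 2 s0))
           + nsq \<xi> * mtrace p T))"

end

theory Submission
  imports Defs
begin

(* On the jets that define the coefficient symbols (g = delta and dg = 0 at the point, the perturbation
   only in dh or only in d^2 h) the Bochner Laplacian is affine in the perturbation, and each coefficient
   matrix is a multiple of the identity plus the matrix D_A of the derivation that an endomorphism A of
   R^n induces on p-forms.  The weighted sums sum_kl W_kl sigma1_kl behind sigma^(1) and the contractions
   in Q^(2), Q^(3) are D_C + gamma Id with C = tr(W) H + H W^T - W H, and sigma^(0) is D_C / 2 for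
   W = xi xi^T.  In the basis dx^I, tr D_A = sum_I sum_(b in I) A_bb, while tr (D_A D_B) adds to the
   product of the diagonals the terms A_cb B_bc with b in I, c not in I: exchanging b for c and back
   costs the same sign twice.  Each ordered pair b <> c is separated by binom (n-2) (p-1) of the
   p-subsets, and what remains is algebra in |xi|^2, xi.h.xi, |h.xi|^2, tr h and |h|^2. *)

lemma sum_if_cond: "(\<Sum>x\<in>A. if P then f x else 0) = (if P then sum f A else 0)"
  by simp

lemma card_filter_set_conv_nth:
  assumes "distinct xs"
  shows "card {k \<in> set xs. P k} = card {i. i < length xs \<and> P (xs ! i)}"
proof -
  have "bij_betw ((!) xs) {i. i < length xs \<and> P (xs ! i)} {k \<in> set xs. P k}"
    using assms by (auto simp: bij_betw_def inj_on_nth in_set_conv_nth)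
  then show ?thesis by (rule bij_betw_same_card[symmetric])
qed

lemma sum_sorted_list_of_set_nth:
  assumes "finite I"
  shows "(\<Sum>r<card I. f (sorted_list_of_set I ! r)) = (\<Sum>b\<in>I. f b)"
  by (rule sum.reindex_bij_betw[OF bij_betw_nth]) (simp_all add: assms)

lemma deriv_affine: "deriv (\<lambda>\<alpha>::real. c + \<alpha> * k) 0 = k"
  by (rule DERIV_imp_deriv) (auto intro!: derivative_eq_intros)

section \<open>Signs of index exchanges\<close>

lemma inversions_sorted:
  assumes "sorted_wrt (<) xs"
  shows "inversions xs = 0"
  using sorted_wrt_nth_less[OF assms] unfolding inversions_def by (force simp: card_eq_0_iff)

definition nbetween :: "'a::linorder set \<Rightarrow> 'a \<Rightarrow> 'a \<Rightarrow> nat" where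
  "nbetween K b c = card {k \<in> K. b < k \<and> k < c \<or> c < k \<and> k < b}"

lemma nbetween_exchange:
  assumes "b \<in> I" "c \<notin> I"
  shows "nbetween (insert c (I - {b})) c b = nbetween I b c"
proof -
  have "{k \<in> insert c (I - {b}). c < k \<and> k < b \<or> b < k \<and> k < c}
      = {k \<in> I. b < k \<and> k < c \<or> c < k \<and> k < b}"
    using assms by auto
  then show ?thesis unfolding nbetween_def by simp
qed

lemma inversions_list_update:
  fixes xs :: "'a::linorder list"
  assumes sorted: "sorted_wrt (<) xs" and r: "r < length xs" and c: "c \<notin> set xs"
  shows "inversions (xs[r := c]) = nbetween (set xs) (xs ! r) c"
proof -
  let ?n = "length xs"
  have less_iff: "xs ! i < xs ! j \<longleftrightarrow> i < j" if "i < ?n" "j < ?n" for i j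
    using sorted_wrt_nth_less[OF sorted] that by (metis less_asym' linorder_neqE_nat)
  define A where "A = {a. a < r \<and> c < xs ! a}"
  define B where "B = {b. r < b \<and> b < ?n \<and> xs ! b < c}"
  have pairs: "{(a, b). a < b \<and> b < length (xs[r := c]) \<and> xs[r := c] ! b < xs[r := c] ! a}
      = (\<lambda>a. (a, r)) ` A \<union> Pair r ` B"
    using r less_iff by (auto simp: A_def B_def nth_list_update split: if_splits)
  have "inversions (xs[r := c]) = card A + card B"
    unfolding inversions_def pairs
    by (subst card_Un_disjoint) (auto simp: A_def B_def card_image inj_on_def)
  also have "\<dots> = card (A \<union> B)"
    by (rule card_Un_disjoint[symmetric]) (auto simp: A_def B_def)
  also have "A \<union> B = {i. i < ?n \<and> (xs ! r < xs ! i \<and> xs ! i < c \<or> c < xs ! i \<and> xs ! i < xs ! r)}"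
    using r less_iff by (auto simp: A_def B_def)
  also have "card \<dots> = nbetween (set xs) (xs ! r) c"
    unfolding nbetween_def using sorted by (simp add: card_filter_set_conv_nth strict_sorted_iff)
  finally show ?thesis .
qed

lemma not_distinct_list_update:
  assumes r: "r < length xs" and "c \<in> set xs" "c \<noteq> xs ! r"
  shows "\<not> distinct (xs[r := c])"
proof
  assume dist: "distinct (xs[r := c])"
  obtain k where k: "k < length xs" "xs ! k = c"
    using assms by (auto simp: in_set_conv_nth)
  then have "k \<noteq> r"
    using assms by auto
  then have same: "xs[r := c] ! k = xs[r := c] ! r"
    using k r by simp
  from dist have "xs[r := c] ! k = xs[r := c] ! r \<longleftrightarrow> k = r"
    by (rule nth_eq_iff_index_eq) (use k r in simp_all)
  with same \<open>k \<noteq> r\<close> show False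
    by simp
qed

lemma comp_zero: "comp (\<lambda>_. 0) xs = 0"
  by (simp add: Defs.comp_def)

lemma comp_unitform_sorted:
  "comp (unitform J) (sorted_list_of_set (I::'n::{finite,linorder} set)) = mId I J"
  by (auto simp: Defs.comp_def unitform_def mId_def inversions_sorted)

lemma comp_unitform_update:
  fixes xs :: "'a::linorder list"
  assumes sorted: "sorted_wrt (<) xs" and r: "r < length xs"
  shows "comp (unitform J) (xs[r := c]) =
    (if c = xs ! r then mId (set xs) J
     else if c \<in> set xs then 0
     else if insert c (set xs - {xs ! r}) = J then (-1) ^ nbetween (set xs) (xs ! r) c else 0)"
proof -
  have dist: "distinct xs"
    using sorted strict_sorted_iff by blast
  consider "c = xs ! r" | "c \<noteq> xs ! r" "c \<in> set xs" | "c \<notin> set xs"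
    by blast
  then show ?thesis
  proof cases
    case 1
    then show ?thesis
      using dist inversions_sorted[OF sorted] by (simp add: Defs.comp_def unitform_def mId_def)
  next
    case 2
    then show ?thesis
      using not_distinct_list_update[OF r] by (simp add: Defs.comp_def)
  next
    case 3
    moreover have "c \<noteq> xs ! r"
      using 3 nth_mem[OF r] by auto
    moreover have "distinct (xs[r := c])"
      using dist 3 by (simp add: distinct_list_update)
    ultimately show ?thesis
      using set_update_distinct[OF dist r, of c] inversions_list_update[OF sorted r 3]
      by (simp add: Defs.comp_def unitform_def)
  qed
qed

section \<open>Derivation matrices on p-forms\<close>

(* The matrix of the derivation of the exterior algebra that extends the endomorphism A: it replaces
   one factor dx^b of dx^I by sum_c A c b dx^c, the way a first-order coefficient such as Gamma acts on
   p-forms in bochner. *)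
definition derivation :: "nat \<Rightarrow> ('n::{finite,linorder} \<Rightarrow> 'n \<Rightarrow> real) \<Rightarrow> 'n fmat" where
  "derivation p A = (\<lambda>I J. \<Sum>r<p. \<Sum>c\<in>UNIV. A c (sorted_list_of_set I ! r) *
     comp (unitform J) ((sorted_list_of_set I)[r := c]))"

definition shifted_derivation ::
    "nat \<Rightarrow> ('n::{finite,linorder} \<Rightarrow> 'n \<Rightarrow> real) \<Rightarrow> real \<Rightarrow> 'n fmat" where
  "shifted_derivation p A a = (\<lambda>I J. derivation p A I J + a * mId I J)"

definition diag_sum :: "('n \<Rightarrow> 'n \<Rightarrow> real) \<Rightarrow> 'n set \<Rightarrow> real" where
  "diag_sum A I = (\<Sum>b\<in>I. A b b)"

definition exchange :: "('n::linorder \<Rightarrow> 'n \<Rightarrow> real) \<Rightarrow> 'n set \<Rightarrow> 'n set \<Rightarrow> real" where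
  "exchange A I J = (\<Sum>b\<in>I. \<Sum>c\<in>-I.
     if insert c (I - {b}) = J then A c b * (-1) ^ nbetween I b c else 0)"

lemma derivation_entry:
  fixes I :: "'n::{finite,linorder} set"
  assumes "I \<in> psubsets p"
  shows "derivation p A I J = (if I = J then diag_sum A I else 0) + exchange A I J"
proof -
  let ?xs = "sorted_list_of_set I"
  define F where "F b = (if I = J then A b b else 0)
      + (\<Sum>c\<in>-I. if insert c (I - {b}) = J then A c b * (-1) ^ nbetween I b c else 0)" for b
  have slot: "(\<Sum>c\<in>UNIV. A c (?xs ! r) * comp (unitform J) (?xs[r := c])) = F (?xs ! r)"
    if r: "r < p" for r
  proof -
    have r': "r < length ?xs"
      using r assms by (simp add: psubsets_def)
    have b: "?xs ! r \<in> I"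
      using nth_mem[OF r'] by simp
    then have "A c (?xs ! r) * comp (unitform J) (?xs[r := c]) =
      (if c \<in> I then (if c = ?xs ! r then (if I = J then A (?xs ! r) (?xs ! r) else 0) else 0)
       else if insert c (I - {?xs ! r}) = J then A c (?xs ! r) * (-1) ^ nbetween I (?xs ! r) c
       else 0)" for c
      using comp_unitform_update[OF _ r', of J c] by (auto simp: mId_def)
    then show ?thesis
      unfolding F_def using b by (simp add: sum.If_cases)
  qed
  have "derivation p A I J = (\<Sum>r<card I. F (?xs ! r))"
    using assms slot by (simp add: derivation_def psubsets_def)
  also have "\<dots> = (\<Sum>b\<in>I. F b)"
    by (simp add: sum_sorted_list_of_set_nth)
  finally show ?thesis
    by (simp add: F_def sum.distrib diag_sum_def exchange_def)
qed

lemma exchange_diag: "exchange A I I = 0"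
  unfolding exchange_def by (intro sum.neutral ballI) auto

lemma exchange_back:
  fixes I :: "'n::{finite,linorder} set"
  assumes b: "b \<in> I" and c: "c \<notin> I"
  shows "exchange B (insert c (I - {b})) I = B b c * (-1) ^ nbetween I b c"
proof -
  define K where "K = insert c (I - {b})"
  have back_iff: "insert c' (K - {b'}) = I \<longleftrightarrow> b' = c \<and> c' = b"
    if "b' \<in> K" "c' \<notin> K" for b' c'
    using that b c unfolding K_def by auto
  have "exchange B K I = (\<Sum>b'\<in>K. \<Sum>c'\<in>-K.
      if b' = c \<and> c' = b then B c' b' * (-1) ^ nbetween K b' c' else 0)"
    unfolding exchange_def by (intro sum.cong refl) (simp add: back_iff)
  also have "\<dots> = (\<Sum>b'\<in>K. if b' = c then B b b' * (-1) ^ nbetween K b' b else 0)"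
  proof (intro sum.cong refl)
    fix b'
    have "b \<in> -K"
      using b c by (auto simp: K_def)
    then show "(\<Sum>c'\<in>-K. if b' = c \<and> c' = b then B c' b' * (-1) ^ nbetween K b' c' else 0)
        = (if b' = c then B b b' * (-1) ^ nbetween K b' b else 0)"
      by (cases "b' = c") (simp_all add: sum.delta')
  qed
  also have "\<dots> = B b c * (-1) ^ nbetween K c b"
    by (simp add: K_def)
  finally show ?thesis
    using nbetween_exchange[OF b c] by (simp add: K_def)
qed

lemma sum_exchange_mult:
  fixes I :: "'n::{finite,linorder} set"
  assumes I: "I \<in> psubsets p"
  shows "(\<Sum>J\<in>psubsets p. exchange A I J * exchange B J I) = (\<Sum>b\<in>I. \<Sum>c\<in>-I. A c b * B b c)"
proof -
  have "(\<Sum>J\<in>psubsets p. exchange A I J * exchange B J I)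
      = (\<Sum>b\<in>I. \<Sum>c\<in>-I. \<Sum>J\<in>psubsets p. if insert c (I - {b}) = J
          then A c b * (-1) ^ nbetween I b c * exchange B J I else 0)"
    unfolding exchange_def[of A] sum_distrib_right
    by (subst sum.swap, rule sum.cong[OF refl], subst sum.swap)
      (simp add: if_distrib[of "\<lambda>x. x * _"] cong: if_cong)
  also have "\<dots> = (\<Sum>b\<in>I. \<Sum>c\<in>-I. A c b * B b c)"
  proof (intro sum.cong refl)
    fix b c assume b: "b \<in> I" and c: "c \<in> -I"
    have "card I > 0"
      using b by (auto simp: card_gt_0_iff)
    then have "insert c (I - {b}) \<in> psubsets p"
      using I b c by (simp add: psubsets_def card_insert_if card_Diff_singleton)
    moreover have "A c b * (-1) ^ k * (B b c * (-1) ^ k) = A c b * B b c" for k :: nat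
    proof -
      have "A c b * (-1) ^ k * (B b c * (-1) ^ k) = A c b * B b c * ((-1) ^ k * (-1) ^ k)"
        by (simp only: ac_simps)
      also have "\<dots> = A c b * B b c"
        by (simp flip: power_mult_distrib)
      finally show ?thesis .
    qed
    ultimately show "(\<Sum>J\<in>psubsets p. if insert c (I - {b}) = J
          then A c b * (-1) ^ nbetween I b c * exchange B J I else 0) = A c b * B b c"
      using exchange_back[OF b, of c B] c by (simp add: sum.delta)
  qed
  finally show ?thesis .
qed

lemma shifted_derivation_entry:
  fixes I :: "'n::{finite,linorder} set"
  assumes "I \<in> psubsets p"
  shows "shifted_derivation p A a I J = (if I = J then diag_sum A I + a else 0) + exchange A I J"
  using derivation_entry[OF assms] by (simp add: shifted_derivation_def mId_def)

lemma derivation_scale: "derivation p (\<lambda>c b. w * A c b) I J = w * derivation p A I J"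
  by (simp add: derivation_def sum_distrib_left algebra_simps)

lemma shifted_derivation_scale:
  "w * shifted_derivation p A a I J = shifted_derivation p (\<lambda>c b. w * A c b) (w * a) I J"
  by (simp add: shifted_derivation_def derivation_scale algebra_simps)

lemma shifted_derivation_sum:
  "(\<Sum>x\<in>X. shifted_derivation p (A x) (a x) I J)
    = shifted_derivation p (\<lambda>c b. \<Sum>x\<in>X. A x c b) (\<Sum>x\<in>X. a x) I J"
proof -
  have "(\<Sum>x\<in>X. derivation p (A x) I J) = derivation p (\<lambda>c b. \<Sum>x\<in>X. A x c b) I J"
    unfolding derivation_def sum_distrib_right
    by (subst sum.swap, rule sum.cong[OF refl], rule sum.swap)
  then show ?thesis
    by (simp add: shifted_derivation_def sum.distrib sum_distrib_right)
qed

lemma card_psubsets: "card (psubsets p :: 'n::finite set set) = CARD('n) choose p"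
  using n_subsets[of "UNIV :: 'n set" p] by (simp add: psubsets_def)

lemma card_psubsets_mem_notmem:
  fixes x y :: "'n::finite"
  assumes xy: "x \<noteq> y"
  shows "real (card {I \<in> psubsets p. x \<in> I \<and> y \<notin> I}) = binom_int (int CARD('n) - 2) (int p - 1)"
proof (cases "p = 0")
  case True
  then show ?thesis
    by (auto simp: psubsets_def binom_int_def)
next
  case False
  let ?K = "{K. K \<subseteq> UNIV - {x, y} \<and> card K = p - 1}"
  have "card {x, y} \<le> CARD('n)"
    by (rule card_mono) auto
  then have n2: "CARD('n) \<ge> 2"
    using xy by simp
  have "{I \<in> psubsets p. x \<in> I \<and> y \<notin> I} = insert x ` ?K"
  proof (intro equalityI subsetI)
    fix I assume "I \<in> {I \<in> psubsets p. x \<in> I \<and> y \<notin> I}"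
    then have "I - {x} \<in> ?K" "I = insert x (I - {x})"
      by (auto simp: psubsets_def)
    then show "I \<in> insert x ` ?K" by blast
  next
    fix I assume "I \<in> insert x ` ?K"
    then obtain K where "K \<in> ?K" "I = insert x K" by auto
    then show "I \<in> {I \<in> psubsets p. x \<in> I \<and> y \<notin> I}"
      using False xy by (auto simp: psubsets_def card_insert_if)
  qed
  moreover have "inj_on (insert x) ?K"
    by (rule inj_onI) (metis Diff_insert_absorb Diff_iff mem_Collect_eq subsetD insertCI)
  moreover have "card ?K = (CARD('n) - 2) choose (p - 1)"
    using n_subsets[of "UNIV - {x, y} :: 'n set" "p - 1"] xy by (simp add: card_Diff_subset numeral_2_eq_2)
  ultimately have "card {I \<in> psubsets p. x \<in> I \<and> y \<notin> I} = (CARD('n) - 2) choose (p - 1)"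
    by (simp add: card_image)
  then show ?thesis
    using False n2 by (simp add: binom_int_def of_nat_diff nat_diff_distrib binomial_gbinomial)
qed

lemma sum_psubsets_mem_notmem:
  fixes f :: "'n::finite \<Rightarrow> 'n \<Rightarrow> real"
  shows "(\<Sum>I\<in>psubsets p. \<Sum>x\<in>I. \<Sum>y\<in>-I. f x y)
    = binom_int (int CARD('n) - 2) (int p - 1) * ((\<Sum>x\<in>UNIV. \<Sum>y\<in>UNIV. f x y) - (\<Sum>x\<in>UNIV. f x x))"
proof -
  let ?\<kappa> = "binom_int (int CARD('n) - 2) (int p - 1)"
  have "(\<Sum>x\<in>I. \<Sum>y\<in>-I. f x y)
      = (\<Sum>x\<in>UNIV. if x \<in> I then (\<Sum>y\<in>UNIV. if y \<in> -I then f x y else 0) else 0)" for I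
    by (simp only: sum.inter_restrict[OF finite_class.finite_UNIV, symmetric] Int_UNIV_left)
  also have "\<dots> I = (\<Sum>x\<in>UNIV. \<Sum>y\<in>UNIV. if x \<in> I \<and> y \<notin> I then f x y else 0)" for I
    by (intro sum.cong refl) auto
  finally have "(\<Sum>I\<in>psubsets p. \<Sum>x\<in>I. \<Sum>y\<in>-I. f x y)
      = (\<Sum>I\<in>psubsets p. \<Sum>x\<in>UNIV. \<Sum>y\<in>UNIV. if x \<in> I \<and> y \<notin> I then f x y else 0)"
    by simp
  also have "\<dots> = (\<Sum>x\<in>UNIV. \<Sum>y\<in>UNIV. \<Sum>I\<in>psubsets p. if x \<in> I \<and> y \<notin> I then f x y else 0)"
    by (subst sum.swap, rule sum.cong[OF refl], rule sum.swap)
  also have "\<dots> = (\<Sum>x\<in>UNIV. \<Sum>y\<in>UNIV. if x = y then 0 else ?\<kappa> * f x y)"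
    by (intro sum.cong refl) (simp add: sum.If_cases Int_def card_psubsets_mem_notmem)
  also have "\<dots> = ?\<kappa> * ((\<Sum>x\<in>UNIV. \<Sum>y\<in>UNIV. f x y) - (\<Sum>x\<in>UNIV. f x x))"
    by (simp add: sum.If_cases Compl_eq_Diff_UNIV sum_diff1 sum_distrib_left sum_subtractf
        right_diff_distrib)
  finally show ?thesis .
qed

lemma mtrace_shifted_derivation:
  "mtrace p (shifted_derivation p A a)
    = (\<Sum>I\<in>psubsets p. diag_sum A (I :: 'n::{finite,linorder} set)) + a * real (CARD('n) choose p)"
  by (simp add: mtrace_def shifted_derivation_entry exchange_diag sum.distrib card_psubsets)

lemma mtrace_mmult_shifted_derivation:
  fixes A B :: "'n::{finite,linorder} \<Rightarrow> 'n \<Rightarrow> real"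
  shows "mtrace p (mmult p (shifted_derivation p A a) (shifted_derivation p B b))
    = (\<Sum>I\<in>psubsets p. (diag_sum A I + a) * (diag_sum B I + b))
      + binom_int (int CARD('n) - 2) (int p - 1)
        * ((\<Sum>x\<in>UNIV. \<Sum>y\<in>UNIV. A y x * B x y) - (\<Sum>x\<in>UNIV. A x x * B x x))"
proof -
  have "mmult p (shifted_derivation p A a) (shifted_derivation p B b) I I
      = (diag_sum A I + a) * (diag_sum B I + b) + (\<Sum>x\<in>I. \<Sum>y\<in>-I. A y x * B x y)"
    if I: "I \<in> psubsets p" for I
  proof -
    have "mmult p (shifted_derivation p A a) (shifted_derivation p B b) I I
        = (\<Sum>K\<in>psubsets p. (if I = K then (diag_sum A I + a) * (diag_sum B I + b) else 0)
            + exchange A I K * exchange B K I)"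
      unfolding mmult_def using I
      by (intro sum.cong refl) (auto simp: shifted_derivation_entry exchange_diag)
    then show ?thesis
      using I by (simp add: sum.distrib sum_exchange_mult)
  qed
  then show ?thesis
    by (simp add: mtrace_def sum.distrib sum_psubsets_mem_notmem)
qed

lemma mtrace_square_scaled_id:
  "mtrace p (mmult p (shifted_derivation p (\<lambda>_ _. 0) c)
      (shifted_derivation p (\<lambda>_ _. 0) c :: 'n::{finite,linorder} fmat))
    = real (CARD('n) choose p) * c ^ 2"
  by (simp add: mtrace_mmult_shifted_derivation diag_sum_def card_psubsets power2_eq_square)

lemma mtrace_fadd: "mtrace p (fadd X Y) = mtrace p X + mtrace p (Y :: 'n::finite fmat)"
  by (simp add: mtrace_def fadd_def sum.distrib)

lemma mtrace_fscale: "mtrace p (fscale c X) = c * mtrace p (X :: 'n::finite fmat)"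
  by (simp add: mtrace_def fscale_def sum_distrib_left)

lemma mtrace_sum: "mtrace p (\<lambda>I J. \<Sum>j\<in>S. F j I J) = (\<Sum>j\<in>S. mtrace p (F j :: 'n::finite fmat))"
  unfolding mtrace_def by (rule sum.swap)

section \<open>The coefficient symbols at a flat 2-jet\<close>

lemma minv_delta: "minv (delta :: 'n::finite \<Rightarrow> 'n \<Rightarrow> real) = delta"
proof -
  have "(\<chi> a b. delta a b) = (mat 1 :: real^'n^'n)"
    by (simp add: mat_def delta_def vec_eq_iff)
  moreover have "matrix_inv (mat 1 :: real^'n^'n) = mat 1"
  proof -
    have "\<exists>A'::real^'n^'n. mat 1 ** A' = mat 1 \<and> A' ** mat 1 = mat 1"
      by (rule exI[of _ "mat 1"]) simp
    then show ?thesis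
      unfolding matrix_inv_def by (metis (mono_tags, lifting) matrix_mul_lid someI_ex)
  qed
  ultimately show ?thesis
    by (auto simp: minv_def mat_def delta_def fun_eq_iff)
qed

lemma sum_delta_mult: "(\<Sum>d\<in>UNIV. delta (c::'n::finite) d * f d) = (f c :: real)"
  by (simp add: delta_def if_distrib[of "\<lambda>x. x * _"] sum.delta' cong: if_cong)

(* Christoffel symbols Gamma^c_ab at a point where g = delta, from g1 k i j = d_k g_ij. *)
definition christoffel :: "('n \<Rightarrow> 'n \<Rightarrow> 'n \<Rightarrow> real) \<Rightarrow> 'n \<Rightarrow> 'n \<Rightarrow> 'n \<Rightarrow> real" where
  "christoffel g1 c a b = (g1 a c b + g1 b c a - g1 c a b) / 2"

lemma christoffel_scale: "christoffel (\<lambda>k i j. \<alpha> * g k i j) c a b = \<alpha> * christoffel g c a b"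
  by (simp add: christoffel_def algebra_simps)

lemma christoffel_add:
  "christoffel (\<lambda>k i j. f k i j + \<alpha> * g k i j) c a b = christoffel f c a b + \<alpha> * christoffel g c a b"
  by (simp add: christoffel_def field_simps)

lemma bochner_flat_form_zero:
  fixes g1 :: "'n::{finite,linorder} \<Rightarrow> 'n \<Rightarrow> 'n \<Rightarrow> real"
  shows "bochner p delta g1 g2 (\<lambda>_. 0) u1 (\<lambda>_ _ _. 0) I =
    2 * (\<Sum>a\<in>UNIV. \<Sum>r<p. \<Sum>c\<in>UNIV. christoffel g1 c a (sorted_list_of_set I ! r)
          * comp (u1 a) ((sorted_list_of_set I)[r := c]))
    + (\<Sum>a\<in>UNIV. \<Sum>c\<in>UNIV. christoffel g1 c a a * comp (u1 c) (sorted_list_of_set I))"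
  unfolding bochner_def Let_def minv_delta
  by (simp add: christoffel_def comp_zero sum_delta_mult sum_negf sum.distrib sum_subtractf
      sum_distrib_left)

lemma bochner_flat_first_order_zero:
  fixes g2 :: "'n::{finite,linorder} \<Rightarrow> 'n \<Rightarrow> 'n \<Rightarrow> 'n \<Rightarrow> real"
  shows "bochner p delta (\<lambda>_ _ _. 0) g2 u0 (\<lambda>_ _. 0) (\<lambda>_ _ _. 0) I =
    (\<Sum>a\<in>UNIV. \<Sum>r<p. \<Sum>c\<in>UNIV. christoffel (g2 a) c a (sorted_list_of_set I ! r)
       * comp u0 ((sorted_list_of_set I)[r := c]))"
  unfolding bochner_def Let_def minv_delta
  by (simp add: christoffel_def comp_zero delta_def sum_negf sum.distrib sum_subtractf sum_distrib_left
      if_distrib[of "\<lambda>x. x * _"] if_distrib[of "\<lambda>x. x / _"] sum_if_cond sum.delta cong: if_cong)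

lemma sigma1c_christoffel:
  fixes H :: "'n::{finite,linorder} \<Rightarrow> 'n \<Rightarrow> real" and k :: 'n
  defines "g \<equiv> \<lambda>m i j. if m = k then H i j else 0"
  shows "sigma1c p G2 H k l
    = shifted_derivation p (\<lambda>c b. 2 * christoffel g c l b) (\<Sum>a\<in>UNIV. christoffel g l a a)"
proof (intro ext)
  fix I J :: "'n set"
  let ?xs = "sorted_list_of_set I"
  define u1 where "u1 = (\<lambda>m. if m = l then unitform J else (\<lambda>_. 0))"
  have u1: "comp (u1 a) xs = (if a = l then comp (unitform J) xs else 0)" for a xs
    by (simp add: u1_def comp_zero)
  define K where "K = 2 * (\<Sum>a\<in>UNIV. \<Sum>r<p. \<Sum>c\<in>UNIV.
        christoffel g c a (?xs ! r) * comp (u1 a) (?xs[r := c]))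
      + (\<Sum>a\<in>UNIV. \<Sum>c\<in>UNIV. christoffel g c a a * comp (u1 c) ?xs)"
  have "bochner p delta (\<lambda>m i j. \<alpha> * g m i j) G2 (\<lambda>_. 0) u1 (\<lambda>_ _ _. 0) I = \<alpha> * K" for \<alpha>
    by (simp add: bochner_flat_form_zero christoffel_scale K_def sum_distrib_left algebra_simps)
  then have "sigma1c p G2 H k l I J = K"
    using deriv_affine[of 0] by (simp add: sigma1c_def bochner_var_def g_def u1_def)
  also have "K = shifted_derivation p (\<lambda>c b. 2 * christoffel g c l b) (\<Sum>a\<in>UNIV. christoffel g l a a) I J"
    by (simp add: K_def u1 shifted_derivation_def derivation_def comp_unitform_sorted
        if_distrib[of "\<lambda>x. _ * x"] sum_if_cond sum.delta' sum_distrib_left sum_distrib_right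
        mult.assoc cong: if_cong)
  finally show "sigma1c p G2 H k l I J
    = shifted_derivation p (\<lambda>c b. 2 * christoffel g c l b) (\<Sum>a\<in>UNIV. christoffel g l a a) I J" .
qed

lemma sigma1c_eq:
  fixes H :: "'n::{finite,linorder} \<Rightarrow> 'n \<Rightarrow> real"
  shows "sigma1c p G2 H k l = shifted_derivation p
     (\<lambda>c b. (if l = k then H c b else 0) + (if b = k then H c l else 0) - (if c = k then H l b else 0))
     (H l k - (if l = k then mtr H / 2 else 0))"
proof -
  define g where "g = (\<lambda>m i j. if m = k then H i j else (0::real))"
  have "(\<lambda>c b. 2 * christoffel g c l b)
      = (\<lambda>c b. (if l = k then H c b else 0) + (if b = k then H c l else 0) - (if c = k then H l b else 0))"
    by (simp add: christoffel_def g_def fun_eq_iff)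
  moreover have "christoffel g l a a = (if a = k then H l a else 0) - (if l = k then H a a / 2 else 0)"
    for a
    by (simp add: christoffel_def g_def)
  then have "(\<Sum>a\<in>UNIV. christoffel g l a a) = H l k - (if l = k then mtr H / 2 else 0)"
    by (simp add: sum_subtractf sum_if_cond mtr_def sum_divide_distrib)
  ultimately show ?thesis
    using sigma1c_christoffel[of p G2 H k l] by (simp add: g_def)
qed

lemma sigma0_derivation:
  fixes H :: "'n::{finite,linorder} \<Rightarrow> 'n \<Rightarrow> real"
  shows "sigma0 p G2 H \<xi> = shifted_derivation p
    (\<lambda>c b. \<Sum>a\<in>UNIV. christoffel (\<lambda>k i j. \<xi> a * \<xi> k * H i j) c a b) 0"
proof (intro ext)
  fix I J :: "'n set"
  let ?xs = "sorted_list_of_set I"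
  define C0 where "C0 = (\<Sum>a\<in>UNIV. \<Sum>r<p. \<Sum>c\<in>UNIV.
      christoffel (G2 a) c a (?xs ! r) * comp (unitform J) (?xs[r := c]))"
  define C1 where "C1 = (\<Sum>a\<in>UNIV. \<Sum>r<p. \<Sum>c\<in>UNIV.
      christoffel (\<lambda>k i j. \<xi> a * \<xi> k * H i j) c a (?xs ! r) * comp (unitform J) (?xs[r := c]))"
  have "bochner p delta (\<lambda>_ _ _. 0) (\<lambda>e k i j. G2 e k i j + \<alpha> * (\<xi> e * \<xi> k * H i j))
      (unitform J) (\<lambda>_ _. 0) (\<lambda>_ _ _. 0) I = C0 + \<alpha> * C1" for \<alpha>
    by (simp add: bochner_flat_first_order_zero christoffel_add C0_def C1_def
        sum_distrib_left sum.distrib algebra_simps)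
  then have "sigma0 p G2 H \<xi> I J = C1"
    using deriv_affine by (simp add: sigma0_def bochner_var_def)
  also have "C1 = derivation p (\<lambda>c b. \<Sum>a\<in>UNIV. christoffel (\<lambda>k i j. \<xi> a * \<xi> k * H i j) c a b) I J"
    unfolding C1_def derivation_def sum_distrib_right
    by (subst sum.swap, rule sum.cong[OF refl], rule sum.swap)
  finally show "sigma0 p G2 H \<xi> I J = shifted_derivation p
    (\<lambda>c b. \<Sum>a\<in>UNIV. christoffel (\<lambda>k i j. \<xi> a * \<xi> k * H i j) c a b) 0 I J"
    by (simp add: shifted_derivation_def)
qed

lemma sigma0_eq:
  fixes H :: "'n::{finite,linorder} \<Rightarrow> 'n \<Rightarrow> real"
  assumes symm: "\<And>i j. H i j = H j i"
  shows "sigma0 p G2 H \<xi>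
    = shifted_derivation p (\<lambda>c b. (nsq \<xi> * H c b + hdot H \<xi> c * \<xi> b - \<xi> c * hdot H \<xi> b) / 2) 0"
proof -
  have pw: "christoffel (\<lambda>k i j. \<xi> a * \<xi> k * H i j) c a b
      = (\<xi> a * \<xi> a * H c b + \<xi> b * (H c a * \<xi> a) - \<xi> c * (H b a * \<xi> a)) / 2" for a b c
    using symm[of a b] by (simp add: christoffel_def algebra_simps)
  have "(\<lambda>c b. \<Sum>a\<in>UNIV. christoffel (\<lambda>k i j. \<xi> a * \<xi> k * H i j) c a b)
      = (\<lambda>c b. (\<Sum>a\<in>UNIV. \<xi> a * \<xi> a * H c b + \<xi> b * (H c a * \<xi> a) - \<xi> c * (H b a * \<xi> a)) / 2)"
    by (simp only: pw sum_divide_distrib[symmetric])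
  also have "\<dots> = (\<lambda>c b. (nsq \<xi> * H c b + hdot H \<xi> c * \<xi> b - \<xi> c * hdot H \<xi> b) / 2)"
    by (simp add: fun_eq_iff nsq_def hdot_def power2_eq_square sum.distrib sum_subtractf
        sum_distrib_left sum_distrib_right algebra_simps)
  finally show ?thesis
    by (simp add: sigma0_derivation)
qed

definition sigma1_generator ::
    "('n::finite \<Rightarrow> 'n \<Rightarrow> real) \<Rightarrow> ('n \<Rightarrow> 'n \<Rightarrow> real) \<Rightarrow> 'n \<Rightarrow> 'n \<Rightarrow> real" where
  "sigma1_generator H W = (\<lambda>c b. mtr W * H c b + smul H (\<lambda>i j. W j i) c b - smul W H c b)"

lemma sigma1c_weighted_sum:
  fixes H :: "'n::{finite,linorder} \<Rightarrow> 'n \<Rightarrow> real"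
  shows "(\<lambda>I J. \<Sum>k\<in>UNIV. \<Sum>l\<in>UNIV. W k l * sigma1c p G2 H k l I J)
    = shifted_derivation p (sigma1_generator H W) (mtr (smul W H) - mtr W * mtr H / 2)"
proof -
  have "(\<lambda>c b. \<Sum>k\<in>UNIV. \<Sum>l\<in>UNIV. W k l *
      ((if l = k then H c b else 0) + (if b = k then H c l else 0) - (if c = k then H l b else 0)))
    = sigma1_generator H W"
    by (simp add: fun_eq_iff sigma1_generator_def mtr_def smul_def ring_distribs sum.distrib
        sum_subtractf if_distrib[of "\<lambda>x. _ * x"] sum_if_cond sum.delta sum.delta' sum_distrib_left
        mult.commute cong: if_cong)
  moreover have "(\<Sum>k\<in>UNIV. \<Sum>l\<in>UNIV. W k l * (H l k - (if l = k then mtr H / 2 else 0)))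
    = mtr (smul W H) - mtr W * mtr H / 2"
    by (simp add: mtr_def smul_def right_diff_distrib sum_subtractf if_distrib[of "\<lambda>x. _ * x"]
        sum.delta' sum_distrib_right cong: if_cong)
  ultimately show ?thesis
    by (simp add: sigma1c_eq shifted_derivation_scale shifted_derivation_sum)
qed

lemma sigma1_generator_diag:
  assumes "\<And>i j. H i j = H j i"
  shows "sigma1_generator H W b b = mtr W * H b b"
  using assms by (simp add: sigma1_generator_def smul_def mult.commute)

lemma diag_sum_sigma1_generator:
  assumes "\<And>i j. H i j = H j i"
  shows "diag_sum (sigma1_generator H W) I = mtr W * diag_sum H I"
  by (simp add: diag_sum_def sigma1_generator_diag[OF assms] sum_distrib_left)

lemma mtr_outer: "mtr (\<lambda>k l. \<xi> k * \<xi> l) = nsq \<xi>"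
  by (simp add: mtr_def nsq_def power2_eq_square)

lemma mtr_contracted: "mtr (\<lambda>k l. \<xi> k * delta l j) = (\<xi> j :: real)"
  by (simp add: mtr_def delta_def if_distrib[of "\<lambda>x. _ * x"] sum.delta cong: if_cong)

lemma sigma1_eq:
  "sigma1 p G2 H \<xi> = shifted_derivation p (sigma1_generator H (\<lambda>k l. \<xi> k * \<xi> l))
     (xhx H \<xi> - nsq \<xi> * mtr H / 2)"
proof -
  have "mtr (smul (\<lambda>k l. \<xi> k * \<xi> l) H) = xhx H \<xi>"
  proof -
    have "mtr (smul (\<lambda>k l. \<xi> k * \<xi> l) H) = (\<Sum>i\<in>UNIV. \<Sum>k\<in>UNIV. \<xi> i * \<xi> k * H k i)"
      by (simp add: mtr_def smul_def)
    also have "\<dots> = (\<Sum>k\<in>UNIV. \<Sum>i\<in>UNIV. \<xi> i * \<xi> k * H k i)"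
      by (rule sum.swap)
    finally show ?thesis
      by (simp add: xhx_def ac_simps)
  qed
  then show ?thesis
    using sigma1c_weighted_sum[of "\<lambda>k l. \<xi> k * \<xi> l" p G2 H] by (simp add: sigma1_def[abs_def] mtr_outer)
qed

lemma sigma1_generator_outer:
  assumes "\<And>i j. H i j = H j i"
  shows "sigma1_generator H (\<lambda>k l. \<xi> k * \<xi> l) c b
    = nsq \<xi> * H c b + hdot H \<xi> c * \<xi> b - \<xi> c * hdot H \<xi> b"
  using assms
  by (simp add: sigma1_generator_def mtr_def nsq_def smul_def hdot_def power2_eq_square
      sum_distrib_left sum_distrib_right algebra_simps)

lemma sigma1c_contracted_eq:
  fixes H :: "'n::{finite,linorder} \<Rightarrow> 'n \<Rightarrow> real"
  shows "(\<lambda>I J. \<Sum>i\<in>UNIV. \<xi> i * sigma1c p G2 H i j I J)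
    = shifted_derivation p (sigma1_generator H (\<lambda>k l. \<xi> k * delta l j)) (hdot H \<xi> j - \<xi> j * mtr H / 2)"
proof -
  have "mtr (smul (\<lambda>k l. \<xi> k * delta l j) H) = hdot H \<xi> j"
    by (simp add: mtr_def smul_def hdot_def delta_def if_distrib[of "\<lambda>x. _ * x"] sum.delta
        mult.commute cong: if_cong)
  moreover have "(\<Sum>k\<in>UNIV. \<Sum>l\<in>UNIV. \<xi> k * delta l j * f k l) = (\<Sum>i\<in>UNIV. \<xi> i * f i j)" for f
    by (simp add: delta_def if_distrib[of "\<lambda>x. _ * x"] if_distrib[of "\<lambda>x. x * _"] sum.delta
        cong: if_cong)
  ultimately show ?thesis
    using sigma1c_weighted_sum[of "\<lambda>k l. \<xi> k * delta l j" p G2 H] by (simp add: mtr_contracted)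
qed

lemma sigma1_generator_contracted:
  "sigma1_generator H (\<lambda>k l. \<xi> k * delta l j) c b = \<xi> j * H c b + \<xi> b * H c j - \<xi> c * H j b"
  by (simp add: sigma1_generator_def mtr_def smul_def delta_def if_distrib[of "\<lambda>x. _ * x"]
      mult.commute cong: if_cong)

section \<open>Algebra in the invariants of h and xi\<close>

lemma xhx_eq_sum_hdot: "xhx H \<xi> = (\<Sum>i\<in>UNIV. \<xi> i * hdot H \<xi> i)"
  by (simp add: xhx_def hdot_def sum_distrib_left algebra_simps)

lemma mtr_square_symmetric:
  assumes "\<And>i j. H i j = H j i"
  shows "mtr (smul H H) = (\<Sum>b\<in>UNIV. \<Sum>c\<in>UNIV. H b c * H b c)"
  using assms by (simp add: mtr_def smul_def)

lemma trace_square_sigma1_generator_outer: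
  fixes H :: "'n::finite \<Rightarrow> 'n \<Rightarrow> real" and \<xi> :: "'n \<Rightarrow> real"
  assumes symm: "\<And>i j. H i j = H j i"
  defines "A \<equiv> sigma1_generator H (\<lambda>k l. \<xi> k * \<xi> l)"
  shows "(\<Sum>x\<in>UNIV. \<Sum>y\<in>UNIV. A y x * A x y)
    = nsq \<xi> ^ 2 * mtr (smul H H) + 2 * xhx H \<xi> ^ 2 - 2 * nsq \<xi> * nsq (hdot H \<xi>)"
proof -
  define m where "m = nsq \<xi>"
  define hx where "hx = hdot H \<xi>"
  have "A y x * A x y = m * m * (H x y * H x y) + 2 * ((\<xi> x * hx x) * (\<xi> y * hx y))
      - (\<xi> y * \<xi> y) * (hx x * hx x) - (\<xi> x * \<xi> x) * (hx y * hx y)" for x y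
    using symm[of y x] by (simp add: A_def sigma1_generator_outer[OF symm] m_def hx_def algebra_simps)
  moreover have "(\<Sum>x\<in>UNIV. \<Sum>y\<in>UNIV. (\<xi> x * hx x) * (\<xi> y * hx y)) = xhx H \<xi> ^ 2"
    by (simp add: xhx_eq_sum_hdot hx_def power2_eq_square sum_product)
  moreover have "(\<Sum>x\<in>UNIV. \<Sum>y\<in>UNIV. (\<xi> y * \<xi> y) * (hx x * hx x)) = m * nsq hx"
    by (simp add: m_def nsq_def power2_eq_square sum_product) (rule sum.swap)
  moreover have "(\<Sum>x\<in>UNIV. \<Sum>y\<in>UNIV. (\<xi> x * \<xi> x) * (hx y * hx y)) = m * nsq hx"
    by (simp add: m_def nsq_def power2_eq_square sum_product)
  ultimately show ?thesis
    by (simp add: sum.distrib sum_subtractf sum_distrib_left[symmetric] mtr_square_symmetric[OF symm]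
        m_def hx_def power2_eq_square)
qed

lemma sum_trace_square_sigma1_generator_contracted:
  fixes H :: "'n::finite \<Rightarrow> 'n \<Rightarrow> real" and \<xi> :: "'n \<Rightarrow> real"
  assumes symm: "\<And>i j. H i j = H j i"
  defines "B \<equiv> \<lambda>j. sigma1_generator H (\<lambda>k l. \<xi> k * delta l j)"
  shows "(\<Sum>j\<in>UNIV. \<Sum>x\<in>UNIV. \<Sum>y\<in>UNIV. B j y x * B j x y)
    = 2 * nsq (hdot H \<xi>) - nsq \<xi> * mtr (smul H H)"
proof -
  define u where "u = (\<Sum>b\<in>UNIV. \<Sum>c\<in>UNIV. H b c * H b c)"
  have pw: "B j y x * B j x y = (\<xi> j * \<xi> j) * (H x y * H x y) + 2 * ((\<xi> x * H x j) * (\<xi> y * H y j))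
      - (\<xi> x * \<xi> x) * (H y j * H y j) - (\<xi> y * \<xi> y) * (H x j * H x j)" for j x y
    using symm[of y x] symm[of j x] symm[of j y]
    by (simp add: B_def sigma1_generator_contracted algebra_simps)
  have swap_u: "(\<Sum>j\<in>UNIV. \<Sum>x\<in>UNIV. H x j * H x j) = u"
    unfolding u_def by (rule sum.swap)
  have "(\<Sum>j\<in>UNIV. \<Sum>x\<in>UNIV. \<Sum>y\<in>UNIV. (\<xi> j * \<xi> j) * (H x y * H x y)) = nsq \<xi> * u"
    by (simp add: u_def nsq_def power2_eq_square sum_distrib_left[symmetric]
        sum_distrib_right[symmetric])
  moreover have "hdot H \<xi> j = (\<Sum>x\<in>UNIV. \<xi> x * H x j)" for j
    using symm by (simp add: hdot_def mult.commute)
  then have "(\<Sum>j\<in>UNIV. \<Sum>x\<in>UNIV. \<Sum>y\<in>UNIV. (\<xi> x * H x j) * (\<xi> y * H y j)) = nsq (hdot H \<xi>)"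
    by (simp add: nsq_def power2_eq_square sum_product)
  moreover have "(\<Sum>j\<in>UNIV. \<Sum>x\<in>UNIV. \<Sum>y\<in>UNIV. (\<xi> x * \<xi> x) * (H y j * H y j))
      = (\<Sum>j\<in>UNIV. (\<Sum>x\<in>UNIV. \<xi> x * \<xi> x) * (\<Sum>y\<in>UNIV. H y j * H y j))"
    by (simp add: sum_product)
  then have "(\<Sum>j\<in>UNIV. \<Sum>x\<in>UNIV. \<Sum>y\<in>UNIV. (\<xi> x * \<xi> x) * (H y j * H y j)) = nsq \<xi> * u"
    by (simp add: nsq_def power2_eq_square swap_u flip: sum_distrib_left)
  moreover have "(\<Sum>j\<in>UNIV. \<Sum>x\<in>UNIV. \<Sum>y\<in>UNIV. (\<xi> y * \<xi> y) * (H x j * H x j))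
      = (\<Sum>j\<in>UNIV. \<Sum>x\<in>UNIV. (\<Sum>y\<in>UNIV. \<xi> y * \<xi> y) * (H x j * H x j))"
    by (simp add: sum_distrib_right)
  then have "(\<Sum>j\<in>UNIV. \<Sum>x\<in>UNIV. \<Sum>y\<in>UNIV. (\<xi> y * \<xi> y) * (H x j * H x j)) = nsq \<xi> * u"
    by (simp add: nsq_def power2_eq_square swap_u flip: sum_distrib_left)
  ultimately show ?thesis
    by (simp add: pw sum.distrib sum_subtractf mtr_square_symmetric[OF symm] u_def
        flip: sum_distrib_left)
qed

lemma nsq_pos:
  assumes "\<xi> \<noteq> (\<lambda>_. 0)"
  shows "nsq (\<xi> :: 'n::finite \<Rightarrow> real) > 0"
proof -
  obtain i where "\<xi> i \<noteq> 0"
    using assms by auto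
  then have "0 < \<xi> i ^ 2"
    by simp
  also have "\<dots> \<le> nsq \<xi>"
    unfolding nsq_def by (rule member_le_sum) auto
  finally show ?thesis .
qed

lemma vnorm_powr:
  assumes "nsq \<xi> > 0"
  shows "vnorm \<xi> powr x = vnorm \<xi> powr (x - 4) * nsq \<xi> ^ 2"
proof -
  have "vnorm \<xi> powr x = vnorm \<xi> powr (x - 4) * vnorm \<xi> powr 4"
    by (simp flip: powr_add)
  also have "vnorm \<xi> powr 4 = sqrt (nsq \<xi>) ^ 4"
    using assms by (simp add: vnorm_def powr_realpow)
  also have "\<dots> = (sqrt (nsq \<xi>) ^ 2) ^ 2"
    by (simp only: power_mult[symmetric]) simp
  also have "\<dots> = nsq \<xi> ^ 2"
    using assms by simp
  finally show ?thesis .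
qed

lemma smul_proj_perp:
  "smul H (proj_perp \<xi>) i k = H i k - hdot H \<xi> i * \<xi> k / nsq \<xi>"
  by (simp add: smul_def proj_perp_def hdot_def delta_def right_diff_distrib sum_subtractf
      sum_divide_distrib sum_distrib_right mult.assoc if_distrib[of "\<lambda>x. _ * x"] cong: if_cong)

lemma mtr_smul_proj_perp: "mtr (smul H (proj_perp \<xi>)) = mtr H - xhx H \<xi> / nsq \<xi>"
  by (simp add: mtr_def smul_proj_perp xhx_eq_sum_hdot sum_subtractf sum_divide_distrib mult.commute)

lemma mtr_square_smul_proj_perp:
  fixes H :: "'n::finite \<Rightarrow> 'n \<Rightarrow> real"
  assumes symm: "\<And>i j. H i j = H j i" and m: "nsq \<xi> \<noteq> 0"
  defines "HP \<equiv> smul H (proj_perp \<xi>)"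
  shows "mtr (smul HP HP) = mtr (smul H H) - 2 * nsq (hdot H \<xi>) / nsq \<xi> + xhx H \<xi> ^ 2 / nsq \<xi> ^ 2"
proof -
  define m where "m = nsq \<xi>"
  define hx where "hx = hdot H \<xi>"
  have pw: "HP i k * HP k i = H i k * H i k - (hx i * (H i k * \<xi> k)) / m - (hx k * (H k i * \<xi> i)) / m
       + ((\<xi> i * hx i) * (\<xi> k * hx k)) / (m * m)" for i k
    using symm[of k i] m by (simp add: HP_def smul_proj_perp m_def hx_def field_simps)
  have row: "(\<Sum>k\<in>UNIV. H i k * \<xi> k) = hx i" for i
    by (simp add: hx_def hdot_def)
  have "(\<Sum>i\<in>UNIV. \<Sum>k\<in>UNIV. (hx i * (H i k * \<xi> k)) / m) = nsq hx / m"
    by (simp add: row nsq_def power2_eq_square flip: sum_divide_distrib sum_distrib_left)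
  moreover have "(\<Sum>i\<in>UNIV. \<Sum>k\<in>UNIV. (hx k * (H k i * \<xi> i)) / m) = nsq hx / m"
    by (subst sum.swap) (simp add: row nsq_def power2_eq_square flip: sum_divide_distrib sum_distrib_left)
  moreover have "(\<Sum>i\<in>UNIV. \<Sum>k\<in>UNIV. ((\<xi> i * hx i) * (\<xi> k * hx k)) / (m * m)) = xhx H \<xi> ^ 2 / m ^ 2"
    by (simp add: xhx_eq_sum_hdot hx_def power2_eq_square sum_product sum_divide_distrib)
  moreover have "mtr (smul HP HP) = (\<Sum>i\<in>UNIV. \<Sum>k\<in>UNIV. HP i k * HP k i)"
    by (simp add: mtr_def smul_def)
  ultimately show ?thesis
    unfolding m_def[symmetric] hx_def[symmetric]
    by (simp add: pw sum.distrib sum_subtractf mtr_square_symmetric[OF symm])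
qed

lemma sum_square_minus_contraction:
  fixes \<xi> \<beta> :: "'n::finite \<Rightarrow> real" and d :: "'a \<Rightarrow> real"
  assumes "finite S"
    and m: "(\<Sum>j\<in>UNIV. \<xi> j ^ 2) = m" and a: "(\<Sum>j\<in>UNIV. \<xi> j * \<beta> j) = a"
  shows "(\<Sum>I\<in>S. (m * d I + a) ^ 2) - m * (\<Sum>j\<in>UNIV. \<Sum>I\<in>S. (\<xi> j * d I + \<beta> j) ^ 2)
    = real (card S) * (a ^ 2 - m * (\<Sum>j\<in>UNIV. \<beta> j ^ 2))"
proof -
  have "(\<Sum>j\<in>UNIV. (\<xi> j * d I + \<beta> j) ^ 2) = d I ^ 2 * m + 2 * d I * a + (\<Sum>j\<in>UNIV. \<beta> j ^ 2)" for I
  proof -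
    have "(\<Sum>j\<in>UNIV. (\<xi> j * d I + \<beta> j) ^ 2)
        = (\<Sum>j\<in>UNIV. d I ^ 2 * \<xi> j ^ 2 + 2 * d I * (\<xi> j * \<beta> j) + \<beta> j ^ 2)"
      by (simp add: power2_eq_square algebra_simps)
    also have "\<dots> = d I ^ 2 * m + 2 * d I * a + (\<Sum>j\<in>UNIV. \<beta> j ^ 2)"
      by (simp add: sum.distrib m a flip: sum_distrib_left)
    finally show ?thesis .
  qed
  then have "m * (\<Sum>j\<in>UNIV. \<Sum>I\<in>S. (\<xi> j * d I + \<beta> j) ^ 2)
      = (\<Sum>I\<in>S. m * (d I ^ 2 * m + 2 * d I * a + (\<Sum>j\<in>UNIV. \<beta> j ^ 2)))"
    by (subst sum.swap) (simp add: sum_distrib_left)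
  then show ?thesis
    by (simp add: sum_subtractf[symmetric] power2_eq_square algebra_simps)
qed

(* These are the diagonal parts of tr (sigma1^2) and |xi|^2 sum_j tr (V_j^2), V_j = sum_i xi_i sigma1_ij;
   they differ only by a constant because sigma1 = sum_j xi_j V_j. *)
lemma sum_square_shift_defect:
  fixes H :: "'n::finite \<Rightarrow> 'n \<Rightarrow> real" and d :: "'a \<Rightarrow> real"
  assumes "finite S"
  shows "(\<Sum>I\<in>S. (nsq \<xi> * d I + (xhx H \<xi> - nsq \<xi> * mtr H / 2)) ^ 2)
      - nsq \<xi> * (\<Sum>j\<in>UNIV. \<Sum>I\<in>S. (\<xi> j * d I + (hdot H \<xi> j - \<xi> j * mtr H / 2)) ^ 2)
    = real (card S) * (xhx H \<xi> ^ 2 - nsq \<xi> * nsq (hdot H \<xi>))"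
proof -
  let ?\<beta> = "\<lambda>j. hdot H \<xi> j - \<xi> j * mtr H / 2"
  have "(\<Sum>j\<in>UNIV. \<xi> j * ?\<beta> j) = (\<Sum>j\<in>UNIV. \<xi> j * hdot H \<xi> j - mtr H / 2 * \<xi> j ^ 2)"
    by (simp add: power2_eq_square algebra_simps)
  also have "\<dots> = xhx H \<xi> - nsq \<xi> * mtr H / 2"
    by (simp add: sum_subtractf nsq_def xhx_eq_sum_hdot flip: sum_distrib_left sum_divide_distrib)
  finally have xb: "(\<Sum>j\<in>UNIV. \<xi> j * ?\<beta> j) = xhx H \<xi> - nsq \<xi> * mtr H / 2" .
  have contraction: "(\<Sum>I\<in>S. (nsq \<xi> * d I + (xhx H \<xi> - nsq \<xi> * mtr H / 2)) ^ 2)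
      - nsq \<xi> * (\<Sum>j\<in>UNIV. \<Sum>I\<in>S. (\<xi> j * d I + ?\<beta> j) ^ 2)
    = real (card S) * ((xhx H \<xi> - nsq \<xi> * mtr H / 2) ^ 2 - nsq \<xi> * (\<Sum>j\<in>UNIV. ?\<beta> j ^ 2))"
    by (rule sum_square_minus_contraction[OF assms _ xb]) (simp add: nsq_def)
  have "(\<Sum>j\<in>UNIV. ?\<beta> j ^ 2)
      = (\<Sum>j\<in>UNIV. hdot H \<xi> j ^ 2 - mtr H * (\<xi> j * hdot H \<xi> j) + mtr H ^ 2 / 4 * \<xi> j ^ 2)"
    by (simp add: power2_eq_square field_simps)
  then have squares: "(\<Sum>j\<in>UNIV. ?\<beta> j ^ 2) = nsq (hdot H \<xi>) - mtr H * xhx H \<xi> + mtr H ^ 2 / 4 * nsq \<xi>"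
    by (simp add: sum.distrib sum_subtractf nsq_def xhx_eq_sum_hdot flip: sum_distrib_left sum_divide_distrib)
  show ?thesis
    unfolding contraction squares by (simp add: power2_eq_square field_simps)
qed

lemma mtrace_sigma1:
  fixes H :: "'n::{finite,linorder} \<Rightarrow> 'n \<Rightarrow> real"
  assumes symm: "\<And>i j. H i j = H j i"
  shows "mtrace p (sigma1 p G2 H \<xi>) = nsq \<xi> * (\<Sum>I\<in>psubsets p. diag_sum H I)
    + (xhx H \<xi> - nsq \<xi> * mtr H / 2) * real (CARD('n) choose p)"
  by (simp add: sigma1_eq mtrace_shifted_derivation diag_sum_sigma1_generator[of H, OF symm]
      mtr_outer sum_distrib_left)

lemma mtrace_sigma0:
  fixes H :: "'n::{finite,linorder} \<Rightarrow> 'n \<Rightarrow> real"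
  assumes symm: "\<And>i j. H i j = H j i"
  shows "mtrace p (sigma0 p G2 H \<xi>) = nsq \<xi> / 2 * (\<Sum>I\<in>psubsets p. diag_sum H I)"
  by (simp add: sigma0_eq[of H, OF symm] mtrace_shifted_derivation diag_sum_def sum_distrib_left
      sum_divide_distrib algebra_simps)

lemma mtrace_sigma1c_xi_hxi:
  fixes H :: "'n::{finite,linorder} \<Rightarrow> 'n \<Rightarrow> real"
  assumes symm: "\<And>i j. H i j = H j i"
  shows "mtrace p (\<lambda>I J. \<Sum>i\<in>UNIV. \<Sum>j\<in>UNIV.
      sigma1c p G2 H i j I J * (\<xi> i * hdot H \<xi> j + \<xi> j * hdot H \<xi> i))
    = 2 * xhx H \<xi> * (\<Sum>I\<in>psubsets p. diag_sum H I)
      + (2 * nsq (hdot H \<xi>) - mtr H * xhx H \<xi>) * real (CARD('n) choose p)"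
proof -
  define hx where "hx = hdot H \<xi>"
  define W where "W = (\<lambda>i j. \<xi> i * hx j + \<xi> j * hx i)"
  have trW: "mtr W = 2 * xhx H \<xi>"
    by (simp add: W_def mtr_def hx_def xhx_eq_sum_hdot sum.distrib sum_distrib_left)
  have row: "hx k = (\<Sum>i\<in>UNIV. H k i * \<xi> i)" for k
    by (simp add: hx_def hdot_def)
  have "(\<Sum>i\<in>UNIV. \<Sum>k\<in>UNIV. \<xi> i * hx k * H k i) = (\<Sum>k\<in>UNIV. hx k * (\<Sum>i\<in>UNIV. H k i * \<xi> i))"
    by (subst sum.swap) (simp add: sum_distrib_left ac_simps)
  moreover have "(\<Sum>i\<in>UNIV. \<Sum>k\<in>UNIV. \<xi> k * hx i * H k i) = (\<Sum>i\<in>UNIV. hx i * (\<Sum>k\<in>UNIV. H i k * \<xi> k))"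
    using symm by (simp add: sum_distrib_left ac_simps)
  ultimately have "mtr (smul W H) = 2 * nsq hx"
    by (simp add: W_def mtr_def smul_def ring_distribs sum.distrib nsq_def power2_eq_square flip: row)
  with trW have "(\<lambda>I J. \<Sum>i\<in>UNIV. \<Sum>j\<in>UNIV. sigma1c p G2 H i j I J * W i j)
      = shifted_derivation p (sigma1_generator H W) (2 * nsq hx - mtr H * xhx H \<xi>)"
    using sigma1c_weighted_sum[of W p G2 H] by (simp add: mult.commute)
  then have "mtrace p (\<lambda>I J. \<Sum>i\<in>UNIV. \<Sum>j\<in>UNIV. sigma1c p G2 H i j I J * W i j)
      = 2 * xhx H \<xi> * (\<Sum>I\<in>psubsets p. diag_sum H I)
        + (2 * nsq hx - mtr H * xhx H \<xi>) * real (CARD('n) choose p)"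
    by (simp add: mtrace_shifted_derivation diag_sum_sigma1_generator[of H, OF symm] trW sum_distrib_left)
  then show ?thesis
    by (simp add: W_def hx_def)
qed

lemma mtrace_square_sigma1:
  fixes H :: "'n::{finite,linorder} \<Rightarrow> 'n \<Rightarrow> real" and \<xi> :: "'n \<Rightarrow> real"
  assumes symm: "\<And>i j. H i j = H j i"
  defines "A \<equiv> sigma1_generator H (\<lambda>k l. \<xi> k * \<xi> l)"
  shows "mtrace p (mmult p (sigma1 p G2 H \<xi>) (sigma1 p G2 H \<xi>))
    = (\<Sum>I\<in>psubsets p. (nsq \<xi> * diag_sum H I + (xhx H \<xi> - nsq \<xi> * mtr H / 2)) ^ 2)
      + binom_int (int CARD('n) - 2) (int p - 1)
        * ((\<Sum>x\<in>UNIV. \<Sum>y\<in>UNIV. A y x * A x y) - nsq \<xi> ^ 2 * (\<Sum>x\<in>UNIV. H x x ^ 2))"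
  by (simp add: A_def sigma1_eq mtrace_mmult_shifted_derivation diag_sum_sigma1_generator[of H, OF symm]
      sigma1_generator_diag[of H, OF symm] mtr_outer power2_eq_square sum_distrib_left ac_simps)

lemma mtrace_square_sigma1c_contracted:
  fixes H :: "'n::{finite,linorder} \<Rightarrow> 'n \<Rightarrow> real" and \<xi> :: "'n \<Rightarrow> real" and j :: 'n
    and p :: nat and G2 :: "'n \<Rightarrow> 'n \<Rightarrow> 'n \<Rightarrow> 'n \<Rightarrow> real"
  assumes symm: "\<And>i j. H i j = H j i"
  defines "B \<equiv> sigma1_generator H (\<lambda>k l. \<xi> k * delta l j)"
    and "V \<equiv> \<lambda>I J. \<Sum>i\<in>UNIV. \<xi> i * sigma1c p G2 H i j I J"
  shows "mtrace p (mmult p V V)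
    = (\<Sum>I\<in>psubsets p. (\<xi> j * diag_sum H I + (hdot H \<xi> j - \<xi> j * mtr H / 2)) ^ 2)
      + binom_int (int CARD('n) - 2) (int p - 1)
        * ((\<Sum>x\<in>UNIV. \<Sum>y\<in>UNIV. B y x * B x y) - \<xi> j ^ 2 * (\<Sum>x\<in>UNIV. H x x ^ 2))"
  by (simp add: B_def V_def sigma1c_contracted_eq mtrace_mmult_shifted_derivation
      diag_sum_sigma1_generator[of H, OF symm] sigma1_generator_diag[of H, OF symm] mtr_contracted
      power2_eq_square sum_distrib_left ac_simps)

lemma mtrace_sigma1_square_minus_contracted:
  fixes H :: "'n::{finite,linorder} \<Rightarrow> 'n \<Rightarrow> real" and \<xi> :: "'n \<Rightarrow> real"
    and p :: nat and G2 :: "'n \<Rightarrow> 'n \<Rightarrow> 'n \<Rightarrow> 'n \<Rightarrow> real"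
  assumes symm: "\<And>i j. H i j = H j i"
  defines "V \<equiv> \<lambda>j I J. \<Sum>i\<in>UNIV. \<xi> i * sigma1c p G2 H i j I J"
  shows "mtrace p (mmult p (sigma1 p G2 H \<xi>) (sigma1 p G2 H \<xi>))
      - nsq \<xi> * (\<Sum>j\<in>UNIV. mtrace p (mmult p (V j) (V j)))
    = real (CARD('n) choose p) * (xhx H \<xi> ^ 2 - nsq \<xi> * nsq (hdot H \<xi>))
      + binom_int (int CARD('n) - 2) (int p - 1)
        * (2 * nsq \<xi> ^ 2 * mtr (smul H H) - 4 * nsq \<xi> * nsq (hdot H \<xi>) + 2 * xhx H \<xi> ^ 2)"
proof -
  let ?A = "sigma1_generator H (\<lambda>k l. \<xi> k * \<xi> l)"
  let ?B = "\<lambda>j. sigma1_generator H (\<lambda>k l. \<xi> k * delta l j)"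
  let ?\<kappa> = "binom_int (int CARD('n) - 2) (int p - 1)"
  let ?h = "\<Sum>x\<in>UNIV. H x x ^ 2"
  have diag: "(\<Sum>I\<in>psubsets p. (nsq \<xi> * diag_sum H I + (xhx H \<xi> - nsq \<xi> * mtr H / 2)) ^ 2)
      - nsq \<xi> * (\<Sum>j\<in>UNIV. \<Sum>I\<in>psubsets p. (\<xi> j * diag_sum H I + (hdot H \<xi> j - \<xi> j * mtr H / 2)) ^ 2)
    = real (CARD('n) choose p) * (xhx H \<xi> ^ 2 - nsq \<xi> * nsq (hdot H \<xi>))"
    using sum_square_shift_defect[where S = "psubsets p" and d = "diag_sum H"] by (simp add: card_psubsets)
  have cross: "(\<Sum>x\<in>UNIV. \<Sum>y\<in>UNIV. ?A y x * ?A x y)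
      - nsq \<xi> * (\<Sum>j\<in>UNIV. \<Sum>x\<in>UNIV. \<Sum>y\<in>UNIV. ?B j y x * ?B j x y)
    = 2 * nsq \<xi> ^ 2 * mtr (smul H H) - 4 * nsq \<xi> * nsq (hdot H \<xi>) + 2 * xhx H \<xi> ^ 2"
    unfolding trace_square_sigma1_generator_outer[of H \<xi>, OF symm]
      sum_trace_square_sigma1_generator_contracted[of H \<xi>, OF symm]
    by (simp add: power2_eq_square algebra_simps)
  have "(\<Sum>j\<in>UNIV. \<xi> j ^ 2 * ?h) = nsq \<xi> * ?h"
    by (simp add: nsq_def sum_distrib_right)
  then have sum_trV: "(\<Sum>j\<in>UNIV. mtrace p (mmult p (V j) (V j)))
      = (\<Sum>j\<in>UNIV. \<Sum>I\<in>psubsets p. (\<xi> j * diag_sum H I + (hdot H \<xi> j - \<xi> j * mtr H / 2)) ^ 2)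
        + ?\<kappa> * ((\<Sum>j\<in>UNIV. \<Sum>x\<in>UNIV. \<Sum>y\<in>UNIV. ?B j y x * ?B j x y) - nsq \<xi> * ?h)"
    unfolding V_def
    by (simp only: mtrace_square_sigma1c_contracted[OF symm] sum.distrib sum_subtractf
        sum_distrib_left[symmetric])
  have combine: "D1 = X + m * S1 \<Longrightarrow> C1 = Y + m * S2
      \<Longrightarrow> (D1 + \<kappa> * (C1 - m ^ 2 * h)) - m * (S1 + \<kappa> * (S2 - m * h)) = X + \<kappa> * Y"
    for D1 S1 C1 S2 X Y m h \<kappa> :: real
    by (simp add: power2_eq_square algebra_simps)
  show ?thesis
    unfolding mtrace_square_sigma1[OF symm] sum_trV
    by (rule combine[OF diag[THEN diff_eq_eq[THEN iffD1]] cross[THEN diff_eq_eq[THEN iffD1]]])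
qed

lemma Q1_eq:
  fixes H :: "'n::{finite,linorder} \<Rightarrow> 'n \<Rightarrow> real"
  assumes symm: "\<And>i j. H i j = H j i" and \<xi>: "\<xi> \<noteq> (\<lambda>_. 0)"
  shows "Q1 p s G2 H \<xi> = ((s - real CARD('n) / 2)^2 - 1/4) * vnorm \<xi> powr (real CARD('n) - 2 * s)
    * real (CARD('n) choose p) * (mtr (smul H (proj_perp \<xi>)))^2"
proof -
  define m where "m = nsq \<xi>"
  define q where "q = xhx H \<xi>"
  define t where "t = mtr H"
  have m: "m > 0"
    using nsq_pos[OF \<xi>] by (simp add: m_def)
  define A where "A = (\<lambda>c b. m * H c b + hdot H \<xi> c * \<xi> b - \<xi> c * hdot H \<xi> b)"
  have "sigma1_generator H (\<lambda>k l. \<xi> k * \<xi> l) = A"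
    by (simp add: fun_eq_iff A_def m_def sigma1_generator_outer[of H, OF symm])
  then have s1: "sigma1 p G2 H \<xi> = shifted_derivation p A (q - m * t / 2)"
    by (simp add: sigma1_eq m_def q_def t_def)
  have s0: "sigma0 p G2 H \<xi> = shifted_derivation p (\<lambda>c b. A c b / 2) 0"
    using sigma0_eq[of H, OF symm] by (simp add: A_def m_def)
  have half: "derivation p (\<lambda>c b. A c b / 2) I J = derivation p A I J / 2" for I J
    using derivation_scale[of p "1/2" A I J] by simp
  have zero: "derivation p (\<lambda>_ _. 0) I J = 0" for I J
    by (simp add: derivation_def)
  have "fadd (fadd (sigma2 H \<xi>) (fscale (-2) (sigma1 p G2 H \<xi>))) (fscale 4 (sigma0 p G2 H \<xi>))
      = shifted_derivation p (\<lambda>_ _. 0) (m * t - q)"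
    unfolding s1 s0
    by (simp add: fun_eq_iff sigma2_def fadd_def fscale_def shifted_derivation_def half zero q_def
        algebra_simps)
  then have "Q1 p s G2 H \<xi> = ((s - real CARD('n) / 2)^2 - 1/4)
      * vnorm \<xi> powr (real CARD('n) - 2 * s - 4) * (real (CARD('n) choose p) * (m * t - q) ^ 2)"
    by (simp add: Q1_def Let_def mtrace_square_scaled_id)
  moreover have "(m * t - q) ^ 2 = m ^ 2 * (t - q / m) ^ 2"
    using m by (simp add: power2_eq_square field_simps)
  ultimately show ?thesis
    using vnorm_powr[of \<xi> "real CARD('n) - 2 * s"] m
    by (simp add: mtr_smul_proj_perp m_def[symmetric] q_def[symmetric] t_def[symmetric] ac_simps)
qed

lemma Q2_eq:
  fixes H :: "'n::{finite,linorder} \<Rightarrow> 'n \<Rightarrow> real"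
  assumes symm: "\<And>i j. H i j = H j i" and \<xi>: "\<xi> \<noteq> (\<lambda>_. 0)"
  shows "Q2 p s G2 H \<xi> =
    (s - real CARD('n) / 2 - 1/2) * vnorm \<xi> powr (real CARD('n) - 2 * s) * 4
      * binom_int (int CARD('n) - 2) (int p - 1)
      * mtr (smul (smul H (proj_perp \<xi>)) (smul H (proj_perp \<xi>)))
    + (s - real CARD('n) / 2 - 1/2) * vnorm \<xi> powr (real CARD('n) - 2 * s - 4) * real (CARD('n) choose p)
      * (- 2 * nsq \<xi> * nsq (hdot H \<xi>) + 2 * (xhx H \<xi>)^2)"
proof -
  define m where "m = nsq \<xi>"
  define q where "q = xhx H \<xi>"
  define w where "w = nsq (hdot H \<xi>)"
  define u where "u = mtr (smul H H)"
  define N where "N = real (CARD('n) choose p)"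
  define \<kappa> where "\<kappa> = binom_int (int CARD('n) - 2) (int p - 1)"
  define c where "c = s - real CARD('n) / 2 - 1/2"
  define E where "E = vnorm \<xi> powr (real CARD('n) - 2 * s - 4)"
  have m: "m > 0"
    using nsq_pos[OF \<xi>] by (simp add: m_def)
  have "2 * (s - real CARD('n) / 2) - 1 = 2 * c"
    by (simp add: c_def)
  then have "Q2 p s G2 H \<xi> = 2 * c * E * (mtrace p (mmult p (sigma1 p G2 H \<xi>) (sigma1 p G2 H \<xi>))
      - nsq \<xi> * (\<Sum>j\<in>UNIV. mtrace p (mmult p (\<lambda>I J. \<Sum>i\<in>UNIV. \<xi> i * sigma1c p G2 H i j I J)
          (\<lambda>I J. \<Sum>i\<in>UNIV. \<xi> i * sigma1c p G2 H i j I J))))"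
    by (simp add: Q2_def Let_def mtrace_fadd mtrace_fscale mtrace_sum E_def)
  also have "\<dots> = 2 * c * E * (N * (q ^ 2 - m * w) + \<kappa> * (2 * m ^ 2 * u - 4 * m * w + 2 * q ^ 2))"
    unfolding mtrace_sigma1_square_minus_contracted[where H = H, OF symm]
    by (simp add: m_def q_def w_def u_def N_def \<kappa>_def)
  finally have Q2: "Q2 p s G2 H \<xi>
      = 2 * c * E * (N * (q ^ 2 - m * w) + \<kappa> * (2 * m ^ 2 * u - 4 * m * w + 2 * q ^ 2))" .
  have powr: "vnorm \<xi> powr (real CARD('n) - 2 * s) = E * m ^ 2"
    using vnorm_powr[of \<xi> "real CARD('n) - 2 * s"] m by (simp add: E_def m_def)
  have trHPHP: "mtr (smul (smul H (proj_perp \<xi>)) (smul H (proj_perp \<xi>))) = u - 2 * w / m + q ^ 2 / m ^ 2"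
    using mtr_square_smul_proj_perp[of H \<xi>, OF symm] m by (simp add: u_def w_def q_def m_def)
  show ?thesis
    unfolding Q2 powr trHPHP c_def[symmetric] E_def[symmetric] m_def[symmetric] q_def[symmetric]
      w_def[symmetric] N_def[symmetric] \<kappa>_def[symmetric]
    using m by (simp add: power2_eq_square field_simps)
qed

lemma Q3_eq:
  fixes H :: "'n::{finite,linorder} \<Rightarrow> 'n \<Rightarrow> real"
  assumes symm: "\<And>i j. H i j = H j i" and \<xi>: "\<xi> \<noteq> (\<lambda>_. 0)"
  shows "Q3 p s G2 H \<xi> =
    (s - real CARD('n) / 2 - 1/2) * vnorm \<xi> powr (real CARD('n) - 2 * s) * real (CARD('n) choose p)
      * (mtr (smul H (proj_perp \<xi>)))^2
    + (s - real CARD('n) / 2 - 1/2) * vnorm \<xi> powr (real CARD('n) - 2 * s - 4) * real (CARD('n) choose p)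
      * (4 * nsq \<xi> * nsq (hdot H \<xi>) - 3 * (xhx H \<xi>)^2 - nsq \<xi> * xhx H \<xi> * mtr H)"
proof -
  define m where "m = nsq \<xi>"
  define q where "q = xhx H \<xi>"
  define t where "t = mtr H"
  define w where "w = nsq (hdot H \<xi>)"
  define N where "N = real (CARD('n) choose p)"
  define L where "L = (\<Sum>I\<in>psubsets p. diag_sum H (I :: 'n set))"
  define c where "c = s - real CARD('n) / 2 - 1/2"
  define E where "E = vnorm \<xi> powr (real CARD('n) - 2 * s - 4)"
  define X where "X = q * (- (m * L + (q - m * t / 2) * N) - 2 * (m / 2 * L))
      + m * t * (- (m * L + (q - m * t / 2) * N) + 2 * (m / 2 * L)) + m * (2 * q * L + (2 * w - t * q) * N)"
  have m: "m > 0"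
    using nsq_pos[OF \<xi>] by (simp add: m_def)
  have "Q3 p s G2 H \<xi> = (2 * (s - real CARD('n) / 2) - 1) * E * X"
    by (simp add: Q3_def Let_def mtrace_fadd mtrace_fscale mtrace_sigma1[OF symm] mtrace_sigma0[OF symm]
        mtrace_sigma1c_xi_hxi[OF symm] E_def X_def m_def q_def t_def w_def L_def N_def)
  also have "\<dots> = c * E * (2 * X)"
    by (simp add: c_def algebra_simps)
  also have "2 * X = N * ((m * t - q) ^ 2 + (4 * m * w - 3 * q ^ 2 - m * q * t))"
    by (simp add: X_def power2_eq_square field_simps)
  also have "(m * t - q) ^ 2 = m ^ 2 * (t - q / m) ^ 2"
    using m by (simp add: power2_eq_square field_simps)
  finally have Q3: "Q3 p s G2 H \<xi>
      = c * E * (N * (m ^ 2 * (t - q / m) ^ 2 + (4 * m * w - 3 * q ^ 2 - m * q * t)))" .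
  have powr: "vnorm \<xi> powr (real CARD('n) - 2 * s) = E * m ^ 2"
    using vnorm_powr[of \<xi> "real CARD('n) - 2 * s"] m by (simp add: E_def m_def)
  have trHP: "mtr (smul H (proj_perp \<xi>)) = t - q / m"
    by (simp add: mtr_smul_proj_perp t_def q_def m_def)
  show ?thesis
    unfolding Q3 powr trHP c_def[symmetric] E_def[symmetric] m_def[symmetric] q_def[symmetric]
      t_def[symmetric] w_def[symmetric] N_def[symmetric]
    by (simp add: algebra_simps)
qed

theorem lemma5p1:
  fixes p :: nat and s :: real
    and G2 :: "'n::{finite,linorder} \<Rightarrow> 'n \<Rightarrow> 'n \<Rightarrow> 'n \<Rightarrow> real"
    and H :: "'n \<Rightarrow> 'n \<Rightarrow> real" and \<xi> :: "'n \<Rightarrow> real"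
  assumes "normal_2jet G2"
    and "\<And>i j. H i j = H j i"
    and "\<xi> \<noteq> (\<lambda>_. 0)"
  defines "n \<equiv> real CARD('n)"
    and "S \<equiv> s - real CARD('n) / 2"
    and "HP \<equiv> smul H (proj_perp \<xi>)"
  shows "Q1 p s G2 H \<xi> =
           (S^2 - 1/4) * vnorm \<xi> powr (n - 2 * s) * real (CARD('n) choose p) * (mtr HP)^2 \<and>
         Q2 p s G2 H \<xi> =
           (S - 1/2) * vnorm \<xi> powr (n - 2 * s) * 4 * binom_int (int CARD('n) - 2) (int p - 1)
              * mtr (smul HP HP)
           + (S - 1/2) * vnorm \<xi> powr (n - 2 * s - 4) * real (CARD('n) choose p)
              * (- 2 * nsq \<xi> * nsq (hdot H \<xi>) + 2 * (xhx H \<xi>)^2) \<and>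
         Q3 p s G2 H \<xi> =
           (S - 1/2) * vnorm \<xi> powr (n - 2 * s) * real (CARD('n) choose p) * (mtr HP)^2
           + (S - 1/2) * vnorm \<xi> powr (n - 2 * s - 4) * real (CARD('n) choose p)
              * (4 * nsq \<xi> * nsq (hdot H \<xi>) - 3 * (xhx H \<xi>)^2
                 - nsq \<xi> * xhx H \<xi> * mtr H)"
  unfolding n_def S_def HP_def
  using Q1_eq[OF assms(2,3)] Q2_eq[OF assms(2,3)] Q3_eq[OF assms(2,3)] by simp

end
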